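(* Let $f$ be a critically coalescing quadratic rational map with critical values $v_1,v_2$. Set $\beta_j=f^j(v_1)$ for $j\ge1$ (so $\beta_1=f(v_1)=f(v_2)$), and suppose that the forward orbit of $v_1$ contains a fixed point $\alpha$ of $f$; let $m$ be minimal with $f^m(v_1)=\alpha$, and assume $m>2$. Let $k>m$. Then, counting critical points of $f^k$ lying in fibers $f^{-k}(z)$: (i) $f^{-k}(z)$ contains exactly $2^{k-1}$ critical points of $f^k$ if and only if $z\in\{v_1,v_2,\beta_1\}$; (ii) for each $2\le j\le m-1$, $f^{-k}(\beta_j)$ contains exactly $2^{k-j}$ critical points of $f^k$; (iii) $f^{-k}(\alpha)$ contains exactly $2^{k-(m-1)}-2$ critical points of $f^k$.
   Context: A quadratic rational map with critical values $v_1\ne v_2$ is critically coalescing if $f(v_1)=f(v_2)$. $f^k$ denotes the $k$-th iterate and $f^{-k}(z)$ the full preimage of $z$ under $f^k$. *)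

theory Defs
  imports Complex_Main "HOL-Computational_Algebra.Polynomial"
begin

text \<open>The Riemann sphere is modelled as complex option; None is the point at infinity.\<close>

type_synonym sphere = "complex option"

definition rat_eval :: "complex poly \<Rightarrow> complex poly \<Rightarrow> sphere \<Rightarrow> sphere" where
  "rat_eval p q w = (case w of
      Some z \<Rightarrow> (if poly q z \<noteq> 0 then Some (poly p z / poly q z) else None)
    | None \<Rightarrow> (if degree p > degree q then None
               else if degree p = degree q then Some (lead_coeff p / lead_coeff q)
               else Some 0))"

definition quadratic_rational_map :: "(sphere \<Rightarrow> sphere) \<Rightarrow> bool" where
  "quadratic_rational_map f \<longleftrightarrow>
     (\<exists>p q. q \<noteq> 0 \<and> coprime p q \<and> max (degree p) (degree q) = 2 \<and> f = rat_eval p q)"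

fun chart :: "sphere \<Rightarrow> sphere \<Rightarrow> complex" where
  "chart (Some a) (Some z) = z"
| "chart (Some a) None = 0"
| "chart None (Some z) = 1 / z"
| "chart None None = 0"

fun unchart :: "sphere \<Rightarrow> complex \<Rightarrow> sphere" where
  "unchart (Some a) z = Some z"
| "unchart None z = (if z = 0 then None else Some (1 / z))"

definition critical_point :: "(sphere \<Rightarrow> sphere) \<Rightarrow> sphere \<Rightarrow> bool" where
  "critical_point g w \<longleftrightarrow>
     ((\<lambda>z. chart (g w) (g (unchart w z))) has_field_derivative 0) (at (chart w w))"

definition critical_value :: "(sphere \<Rightarrow> sphere) \<Rightarrow> sphere \<Rightarrow> bool" where
  "critical_value g v \<longleftrightarrow> (\<exists>c. critical_point g c \<and> g c = v)"

definition crit_in_fiber :: "(sphere \<Rightarrow> sphere) \<Rightarrow> nat \<Rightarrow> sphere \<Rightarrow> nat" where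
  "crit_in_fiber f k z = card {w. (f ^^ k) w = z \<and> critical_point (f ^^ k) w}"

end

theory Submission
  imports Defs
begin

text \<open>
  A quadratic rational map has exactly two critical points \<open>c\<^sub>1, c\<^sub>2\<close>; each is the only
  preimage of its critical value, and every other point has exactly two preimages. By the chain
  rule in charts, \<open>w\<close> is critical for \<open>f\<^sup>k\<close> iff \<open>f\<^sup>i w\<close> is a critical point of \<open>f\<close> for some
  \<open>i < k\<close>. When the critical orbits never return to the critical points, the fibres
  \<open>f\<^sup>-\<^sup>i(c)\<close> have \<open>2\<^sup>i\<close> points and are pairwise disjoint, so the critical points of \<open>f\<^sup>k\<close> in
  \<open>f\<^sup>-\<^sup>k(z)\<close> number \<open>\<Sum> 2\<^sup>i\<close> over the pairs \<open>(i, c)\<close> with \<open>f\<^sup>k\<^sup>-\<^sup>i(c) = z\<close>. For a critically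
  coalescing map whose critical orbit reaches the fixed point \<open>\<alpha>\<close> after \<open>m > 2\<close> steps, these
  pairs are read off the orbit \<open>v\<^sub>1 \<mapsto> \<beta>\<^sub>1 \<mapsto> \<dots> \<mapsto> \<beta>\<^sub>m\<^sub>-\<^sub>1 \<mapsto> \<alpha>\<close>, which has no repetitions before \<open>\<alpha>\<close>.
\<close>

section \<open>Quadratic equations on the sphere\<close>

definition quad_roots :: "complex \<Rightarrow> complex \<Rightarrow> complex \<Rightarrow> sphere set" where
  "quad_roots a b c = {w. case w of None \<Rightarrow> a = 0 | Some z \<Rightarrow> a * z^2 + b * z + c = 0}"

text \<open>These are the zeros of the binary form \<open>a X\<^sup>2 + b XY + c Y\<^sup>2\<close> on the projective line, so
  \<open>\<infinity>\<close> is a root exactly when \<open>a = 0\<close>.\<close>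

lemma card_quad_roots:
  fixes a b c :: complex
  assumes "(a, b, c) \<noteq> (0, 0, 0)"
  shows "card (quad_roots a b c) = (if b^2 - 4 * a * c = 0 then 1 else 2)"
proof (cases "a = 0")
  case False
  define s where "s = csqrt (b^2 - 4 * a * c)"
  have s2: "s^2 = b^2 - 4 * a * c"
    unfolding s_def by simp
  define r1 r2 where "r1 = (- b + s) / (2 * a)" and "r2 = (- b - s) / (2 * a)"
  have factor: "4 * a * (a * z^2 + b * z + c) = (2 * a * (z - r1)) * (2 * a * (z - r2))" for z
  proof -
    have "4 * a * (a * z^2 + b * z + c) = (2 * a * z + b)^2 - s^2"
      unfolding s2 by (simp add: algebra_simps power2_eq_square)
    also have "\<dots> = (2 * a * (z - r1)) * (2 * a * (z - r2))"
      using False unfolding r1_def r2_def by (simp add: field_simps power2_eq_square)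
    finally show ?thesis .
  qed
  have roots: "a * z^2 + b * z + c = 0 \<longleftrightarrow> z = r1 \<or> z = r2" for z
  proof -
    have "a * z^2 + b * z + c = 0 \<longleftrightarrow> 4 * a * (a * z^2 + b * z + c) = 0"
      using False by simp
    also have "\<dots> \<longleftrightarrow> z = r1 \<or> z = r2"
      unfolding factor using False by simp
    finally show ?thesis .
  qed
  have "quad_roots a b c = {Some r1, Some r2}"
    unfolding quad_roots_def using False roots by (auto split: option.splits)
  then have "card (quad_roots a b c) = (if r1 = r2 then 1 else 2)"
    by simp
  moreover have "r1 = r2 \<longleftrightarrow> s = 0"
    using False unfolding r1_def r2_def by (auto simp: field_simps)
  moreover have "s = 0 \<longleftrightarrow> b^2 - 4 * a * c = 0"
    using s2 by (metis power_eq_0_iff zero_power2)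
  ultimately show ?thesis
    by presburger
next
  case a: True
  show ?thesis
  proof (cases "b = 0")
    case False
    have "quad_roots a b c = {None, Some (- c / b)}"
      unfolding quad_roots_def using a False
      by (auto split: option.splits simp: field_simps) (metis add.commute add_eq_0_iff)
    then show ?thesis
      using a False by auto
  next
    case True
    then have "quad_roots a b c = {None}"
      unfolding quad_roots_def using a assms by (auto split: option.splits)
    then show ?thesis
      using a True by auto
  qed
qed

lemma discr_eq_square_at_root:
  fixes a b c z :: complex
  assumes "a * z^2 + b * z + c = 0"
  shows "b^2 - 4 * a * c = (2 * a * z + b)^2"
proof -
  have "(2 * a * z + b)^2 = b^2 - 4 * a * c + 4 * a * (a * z^2 + b * z + c)"
    by (simp add: algebra_simps power2_eq_square)
  with assms show ?thesis
    by simp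
qed

section \<open>Critical points in charts\<close>

definition local_expr :: "(sphere \<Rightarrow> sphere) \<Rightarrow> sphere \<Rightarrow> complex \<Rightarrow> complex" where
  "local_expr g w = (\<lambda>z. chart (g w) (g (unchart w z)))"

definition in_chart :: "sphere \<Rightarrow> sphere \<Rightarrow> bool" where
  "in_chart u x \<longleftrightarrow> unchart u (chart u x) = x"

text \<open>Besides a derivative in charts we ask that \<open>g\<close> maps a neighbourhood of \<open>w\<close> into the
  chart centred at \<open>g w\<close>; this is what makes local expressions compose.\<close>

definition sphere_differentiable :: "(sphere \<Rightarrow> sphere) \<Rightarrow> bool" where
  "sphere_differentiable g \<longleftrightarrow> (\<forall>w.
     (\<exists>D. (local_expr g w has_field_derivative D) (at (chart w w))) \<and>
     (\<forall>\<^sub>F z in nhds (chart w w). in_chart (g w) (g (unchart w z))))"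

lemma unchart_chart_self [simp]: "unchart w (chart w w) = w"
  by (cases w) auto

lemma chart_unchart [simp]: "chart w (unchart w z) = z"
  by (cases w) auto

lemma in_chart_Some: "in_chart (Some b) x \<longleftrightarrow> x \<noteq> None"
  by (cases x) (auto simp: in_chart_def)

lemma in_chart_None: "in_chart None x \<longleftrightarrow> x \<noteq> Some 0"
  by (cases x) (auto simp: in_chart_def)

lemma critical_point_iff_deriv:
  assumes "(local_expr g w has_field_derivative D) (at (chart w w))"
  shows "critical_point g w \<longleftrightarrow> D = 0"
  using assms DERIV_unique unfolding critical_point_def local_expr_def by blast

lemma local_expr_comp_deriv:
  assumes g: "sphere_differentiable g" and h: "sphere_differentiable h"
    and dg: "(local_expr g (h w) has_field_derivative Dg) (at (chart (h w) (h w)))"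
    and dh: "(local_expr h w has_field_derivative Dh) (at (chart w w))"
  shows "(local_expr (g \<circ> h) w has_field_derivative Dg * Dh) (at (chart w w))"
    and "\<forall>\<^sub>F z in nhds (chart w w). in_chart (g (h w)) (g (h (unchart w z)))"
proof -
  have h_in: "\<forall>\<^sub>F z in nhds (chart w w). in_chart (h w) (h (unchart w z))"
    using h unfolding sphere_differentiable_def by blast
  have g_in: "\<forall>\<^sub>F y in nhds (chart (h w) (h w)). in_chart (g (h w)) (g (unchart (h w) y))"
    using g unfolding sphere_differentiable_def by blast
  have h_at: "local_expr h w (chart w w) = chart (h w) (h w)"
    by (simp add: local_expr_def)
  have h_unchart: "h (unchart w z) = unchart (h w) (local_expr h w z)"
    if "in_chart (h w) (h (unchart w z))" for z
    using that unfolding in_chart_def local_expr_def by simp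
  have "\<forall>\<^sub>F z in nhds (chart w w).
      local_expr (g \<circ> h) w z = (local_expr g (h w) \<circ> local_expr h w) z"
    using h_in by (rule eventually_mono) (simp add: local_expr_def in_chart_def)
  moreover have "((local_expr g (h w) \<circ> local_expr h w) has_field_derivative Dg * Dh)
      (at (chart w w))"
    using DERIV_chain[OF _ dh] dg h_at by simp
  ultimately show "(local_expr (g \<circ> h) w has_field_derivative Dg * Dh) (at (chart w w))"
    using DERIV_cong_ev[OF refl _ refl] by blast
  have "filterlim (local_expr h w) (nhds (chart (h w) (h w))) (at (chart w w))"
    using DERIV_isCont[OF dh] h_at unfolding isCont_def by simp
  then have "\<forall>\<^sub>F z in at (chart w w). in_chart (g (h w)) (g (unchart (h w) (local_expr h w z)))"
    using g_in unfolding filterlim_iff by blast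
  then have "\<forall>\<^sub>F z in nhds (chart w w).
      in_chart (g (h w)) (g (unchart (h w) (local_expr h w z)))"
    unfolding eventually_nhds_conv_at using g_in[THEN eventually_nhds_x_imp_x] h_at by simp
  with h_in show "\<forall>\<^sub>F z in nhds (chart w w). in_chart (g (h w)) (g (h (unchart w z)))"
    by eventually_elim (metis h_unchart)
qed

lemma sphere_differentiable_comp:
  assumes "sphere_differentiable g" and "sphere_differentiable h"
  shows "sphere_differentiable (g \<circ> h)"
  unfolding sphere_differentiable_def
proof
  fix w
  obtain Dh where "(local_expr h w has_field_derivative Dh) (at (chart w w))"
    using assms(2) unfolding sphere_differentiable_def by blast
  moreover obtain Dg where "(local_expr g (h w) has_field_derivative Dg) (at (chart (h w) (h w)))"
    using assms(1) unfolding sphere_differentiable_def by blast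
  ultimately show "(\<exists>D. (local_expr (g \<circ> h) w has_field_derivative D) (at (chart w w))) \<and>
      (\<forall>\<^sub>F z in nhds (chart w w). in_chart ((g \<circ> h) w) ((g \<circ> h) (unchart w z)))"
    using local_expr_comp_deriv[OF assms] by auto
qed

lemma critical_point_comp:
  assumes "sphere_differentiable g" and "sphere_differentiable h"
  shows "critical_point (g \<circ> h) w \<longleftrightarrow> critical_point h w \<or> critical_point g (h w)"
proof -
  obtain Dh where dh: "(local_expr h w has_field_derivative Dh) (at (chart w w))"
    using assms(2) unfolding sphere_differentiable_def by blast
  obtain Dg where dg: "(local_expr g (h w) has_field_derivative Dg) (at (chart (h w) (h w)))"
    using assms(1) unfolding sphere_differentiable_def by blast
  have "critical_point (g \<circ> h) w \<longleftrightarrow> Dg * Dh = 0"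
    by (rule critical_point_iff_deriv[OF local_expr_comp_deriv(1)[OF assms dg dh]])
  then show ?thesis
    using critical_point_iff_deriv[OF dh] critical_point_iff_deriv[OF dg] by auto
qed

lemma sphere_differentiable_id: "sphere_differentiable id"
  unfolding sphere_differentiable_def local_expr_def in_chart_def
  by (auto intro!: exI[of _ 1] DERIV_ident)

lemma not_critical_point_id: "\<not> critical_point id w"
proof -
  have "(local_expr id w has_field_derivative 1) (at (chart w w))"
    unfolding local_expr_def by (simp add: DERIV_ident)
  from critical_point_iff_deriv[OF this] show ?thesis
    by simp
qed

lemma sphere_differentiable_funpow:
  "sphere_differentiable f \<Longrightarrow> sphere_differentiable (f ^^ n)"
  by (induction n) (auto simp: sphere_differentiable_id funpow_Suc_right sphere_differentiable_comp)

lemma critical_point_funpow: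
  assumes "sphere_differentiable f"
  shows "critical_point (f ^^ n) w \<longleftrightarrow> (\<exists>i<n. critical_point f ((f ^^ i) w))"
proof (induction n arbitrary: w)
  case 0
  then show ?case
    using not_critical_point_id[unfolded id_def] by simp
next
  case (Suc n)
  have "critical_point (f ^^ Suc n) w \<longleftrightarrow> critical_point f w \<or> critical_point (f ^^ n) (f w)"
    unfolding funpow_Suc_right
    using critical_point_comp[OF sphere_differentiable_funpow[OF assms] assms] by simp
  also have "\<dots> \<longleftrightarrow> (\<exists>i<Suc n. critical_point f ((f ^^ i) w))"
    unfolding Suc.IH less_Suc_eq_0_disj by (auto simp del: funpow.simps simp: funpow_Suc_right)
  finally show ?case .
qed

section \<open>Quadratic rational maps in coordinates\<close>

lemma isCont_eventually_ne:
  fixes g :: "'a::t2_space \<Rightarrow> 'b::t1_space"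
  shows "isCont g x \<Longrightarrow> g x \<noteq> c \<Longrightarrow> \<forall>\<^sub>F z in nhds x. g z \<noteq> c"
  unfolding eventually_nhds_conv_at isCont_def using tendsto_imp_eventually_ne by blast

locale quadratic_map =
  fixes p0 p1 p2 q0 q1 q2 :: complex
  assumes no_common_root: "p2 * a^2 + p1 * a + p0 = 0 \<Longrightarrow> q2 * a^2 + q1 * a + q0 = 0 \<Longrightarrow> False"
    and degree_two: "p2 \<noteq> 0 \<or> q2 \<noteq> 0"
    and den_nonzero: "(q2, q1, q0) \<noteq> (0, 0, 0)"
begin

definition P :: "complex \<Rightarrow> complex" where "P z = p2 * z^2 + p1 * z + p0"
definition Q :: "complex \<Rightarrow> complex" where "Q z = q2 * z^2 + q1 * z + q0"

text \<open>\<open>P_rev\<close> and \<open>Q_rev\<close> are the numerator and denominator of \<open>z \<mapsto> P(1/z)/Q(1/z)\<close>, the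
  expression of \<open>P/Q\<close> in the chart at \<open>\<infinity>\<close>.\<close>

definition P_rev :: "complex \<Rightarrow> complex" where "P_rev z = p2 + p1 * z + p0 * z^2"
definition Q_rev :: "complex \<Rightarrow> complex" where "Q_rev z = q2 + q1 * z + q0 * z^2"

definition qmap :: "sphere \<Rightarrow> sphere" where
  "qmap w = (case w of
      Some a \<Rightarrow> (if Q a \<noteq> 0 then Some (P a / Q a) else None)
    | None \<Rightarrow> (if q2 = 0 then None else Some (p2 / q2)))"

definition fibre_roots :: "sphere \<Rightarrow> sphere set" where
  "fibre_roots y = (case y of
      Some b \<Rightarrow> quad_roots (p2 - b * q2) (p1 - b * q1) (p0 - b * q0)
    | None \<Rightarrow> quad_roots q2 q1 q0)"

definition fibre_discr :: "sphere \<Rightarrow> complex" where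
  "fibre_discr y = (case y of
      Some b \<Rightarrow> (p1 - b * q1)^2 - 4 * (p2 - b * q2) * (p0 - b * q0)
    | None \<Rightarrow> q1^2 - 4 * q2 * q0)"

lemma qmap_Some: "qmap (Some a) = (if Q a \<noteq> 0 then Some (P a / Q a) else None)"
  and qmap_None: "qmap None = (if q2 = 0 then None else Some (p2 / q2))"
  unfolding qmap_def by simp_all

lemma P_Q_no_common_zero: "P a = 0 \<Longrightarrow> Q a = 0 \<Longrightarrow> False"
  unfolding P_def Q_def using no_common_root by blast

lemma P_inverse: "z \<noteq> 0 \<Longrightarrow> P (1 / z) = P_rev z / z^2"
  unfolding P_def P_rev_def by (simp add: field_simps power2_eq_square)

lemma Q_inverse: "z \<noteq> 0 \<Longrightarrow> Q (1 / z) = Q_rev z / z^2"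
  unfolding Q_def Q_rev_def by (simp add: field_simps power2_eq_square)

lemma qmap_eq_iff: "qmap w = y \<longleftrightarrow> w \<in> fibre_roots y"
proof (cases w)
  case None
  then show ?thesis
    using degree_two by (cases y) (auto simp: qmap_Some qmap_None fibre_roots_def quad_roots_def field_simps)
next
  case (Some a)
  show ?thesis
  proof (cases y)
    case None
    then show ?thesis
      using Some by (auto simp: qmap_Some fibre_roots_def quad_roots_def Q_def)
  next
    case (Some b)
    have "(p2 - b * q2) * a^2 + (p1 - b * q1) * a + (p0 - b * q0) = P a - b * Q a"
      by (simp add: P_def Q_def algebra_simps)
    moreover have "Q a \<noteq> 0 \<Longrightarrow> P a / Q a = b \<longleftrightarrow> P a - b * Q a = 0"
      by (auto simp: field_simps)
    ultimately show ?thesis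
      using Some \<open>w = Some a\<close> P_Q_no_common_zero
      by (auto simp: qmap_Some fibre_roots_def quad_roots_def)
  qed
qed

lemma card_fibre_roots: "card (fibre_roots y) = (if fibre_discr y = 0 then 1 else 2)"
proof (cases y)
  case None
  then show ?thesis
    using card_quad_roots[OF den_nonzero] by (simp add: fibre_roots_def fibre_discr_def)
next
  case (Some b)
  have "(p2 - b * q2, p1 - b * q1, p0 - b * q0) \<noteq> (0, 0, 0)"
  proof
    assume coeffs: "(p2 - b * q2, p1 - b * q1, p0 - b * q0) = (0, 0, 0)"
    then have P_eq: "P a = b * Q a" for a
      unfolding P_def Q_def by (simp add: algebra_simps)
    have "q2 \<noteq> 0"
      using coeffs degree_two by auto
    then have "quad_roots q2 q1 q0 \<noteq> {}"
      using card_quad_roots[OF den_nonzero] by (metis card.empty one_neq_zero zero_neq_numeral)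
    then obtain a where "Some a \<in> quad_roots q2 q1 q0"
      using \<open>q2 \<noteq> 0\<close> unfolding quad_roots_def by (auto split: option.splits)
    then have "Q a = 0"
      unfolding quad_roots_def Q_def by simp
    then show False
      using P_eq P_Q_no_common_zero by simp
  qed
  with Some show ?thesis
    using card_quad_roots by (simp add: fibre_roots_def fibre_discr_def)
qed

lemma DERIV_P: "(P has_field_derivative 2 * p2 * a + p1) (at a)"
  and DERIV_Q: "(Q has_field_derivative 2 * q2 * a + q1) (at a)"
  and DERIV_P_rev: "(P_rev has_field_derivative p1 + 2 * p0 * a) (at a)"
  and DERIV_Q_rev: "(Q_rev has_field_derivative q1 + 2 * q0 * a) (at a)"
  unfolding P_def Q_def P_rev_def Q_rev_def by (auto intro!: derivative_eq_intros)

lemma local_analysis_finite_to_finite: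
  assumes "Q a \<noteq> 0"
  shows "\<exists>D. (local_expr qmap (Some a) has_field_derivative D) (at a) \<and>
    (D = 0 \<longleftrightarrow> fibre_discr (qmap (Some a)) = 0) \<and>
    (\<forall>\<^sub>F z in nhds a. in_chart (qmap (Some a)) (qmap (Some z)))"
proof -
  define b where "b = P a / Q a"
  have image: "qmap (Some a) = Some b"
    using assms by (simp add: qmap_Some b_def)
  have "local_expr qmap (Some a) = (\<lambda>z. P z / Q z)"
    unfolding local_expr_def image by (rule ext) (simp add: qmap_Some)
  moreover define D where "D = ((2 * p2 * a + p1) * Q a - P a * (2 * q2 * a + q1)) / (Q a * Q a)"
  ultimately have "(local_expr qmap (Some a) has_field_derivative D) (at a)"
    using DERIV_divide[OF DERIV_P DERIV_Q assms] by simp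
  moreover have "D = 0 \<longleftrightarrow> fibre_discr (qmap (Some a)) = 0"
  proof -
    define g where "g = 2 * (p2 - b * q2) * a + (p1 - b * q1)"
    have P_a: "P a = b * Q a"
      using assms by (simp add: b_def)
    have "(p2 - b * q2) * a^2 + (p1 - b * q1) * a + (p0 - b * q0) = 0"
      using P_a unfolding P_def Q_def by (simp add: algebra_simps)
    then have "fibre_discr (qmap (Some a)) = g^2"
      unfolding image fibre_discr_def option.case g_def by (rule discr_eq_square_at_root)
    moreover have "D = g / Q a"
      unfolding D_def g_def P_a using assms by (simp add: field_simps)
    ultimately show ?thesis
      using assms by simp
  qed
  moreover have "\<forall>\<^sub>F z in nhds a. in_chart (qmap (Some a)) (qmap (Some z))"
    using isCont_eventually_ne[OF DERIV_isCont[OF DERIV_Q] assms]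
    by (rule eventually_mono) (simp add: assms in_chart_Some qmap_Some)
  ultimately show ?thesis
    by blast
qed

lemma local_analysis_finite_to_infinity:
  assumes "Q a = 0"
  shows "\<exists>D. (local_expr qmap (Some a) has_field_derivative D) (at a) \<and>
    (D = 0 \<longleftrightarrow> fibre_discr (qmap (Some a)) = 0) \<and>
    (\<forall>\<^sub>F z in nhds a. in_chart (qmap (Some a)) (qmap (Some z)))"
proof -
  have P_a: "P a \<noteq> 0"
    using P_Q_no_common_zero assms by blast
  have image: "qmap (Some a) = None"
    using assms by (simp add: qmap_Some)
  have "local_expr qmap (Some a) = (\<lambda>z. Q z / P z)"
    unfolding local_expr_def image by (rule ext) (simp add: qmap_Some)
  moreover define D where "D = ((2 * q2 * a + q1) * P a - Q a * (2 * p2 * a + p1)) / (P a * P a)"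
  ultimately have "(local_expr qmap (Some a) has_field_derivative D) (at a)"
    using DERIV_divide[OF DERIV_Q DERIV_P P_a] by simp
  moreover have "D = 0 \<longleftrightarrow> fibre_discr (qmap (Some a)) = 0"
  proof -
    have "q2 * a^2 + q1 * a + q0 = 0"
      using assms unfolding Q_def by simp
    then have "fibre_discr (qmap (Some a)) = (2 * q2 * a + q1)^2"
      unfolding image fibre_discr_def option.case by (rule discr_eq_square_at_root)
    then show ?thesis
      unfolding D_def using assms P_a by simp
  qed
  moreover have "\<forall>\<^sub>F z in nhds a. in_chart (qmap (Some a)) (qmap (Some z))"
    using isCont_eventually_ne[OF DERIV_isCont[OF DERIV_P] P_a]
    by (rule eventually_mono) (simp add: assms in_chart_None qmap_Some)
  ultimately show ?thesis
    by blast
qed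

lemma local_analysis_infinity_to_finite:
  assumes "q2 \<noteq> 0"
  shows "\<exists>D. (local_expr qmap None has_field_derivative D) (at 0) \<and>
    (D = 0 \<longleftrightarrow> fibre_discr (qmap None) = 0) \<and>
    (\<forall>\<^sub>F z in nhds 0. in_chart (qmap None) (qmap (unchart None z)))"
proof -
  define b where "b = p2 / q2"
  have image: "qmap None = Some b"
    using assms by (simp add: qmap_None b_def)
  have "local_expr qmap None = (\<lambda>z. P_rev z / Q_rev z)"
  proof
    fix z
    show "local_expr qmap None z = P_rev z / Q_rev z"
      using P_inverse[of z] Q_inverse[of z]
      by (cases "z = 0") (auto simp: local_expr_def image b_def P_rev_def Q_rev_def qmap_Some)
  qed
  moreover have Q_rev_0: "Q_rev 0 \<noteq> 0"
    using assms by (simp add: Q_rev_def)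
  moreover define D where "D = (p1 * Q_rev 0 - P_rev 0 * q1) / (Q_rev 0 * Q_rev 0)"
  ultimately have "(local_expr qmap None has_field_derivative D) (at 0)"
    using DERIV_divide[OF DERIV_P_rev DERIV_Q_rev Q_rev_0] by simp
  moreover have "D = 0 \<longleftrightarrow> fibre_discr (qmap None) = 0"
  proof -
    have p2: "p2 = b * q2"
      using assms by (simp add: b_def)
    have "D = (p1 - b * q1) / q2"
      unfolding D_def P_rev_def Q_rev_def using assms p2 by (simp add: field_simps)
    moreover have "fibre_discr (qmap None) = (p1 - b * q1)^2"
      unfolding image fibre_discr_def using p2 by simp
    ultimately show ?thesis
      using assms by simp
  qed
  moreover have "\<forall>\<^sub>F z in nhds 0. in_chart (qmap None) (qmap (unchart None z))"
    using isCont_eventually_ne[OF DERIV_isCont[OF DERIV_Q_rev] Q_rev_0]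
  proof (rule eventually_mono)
    fix z
    assume "Q_rev z \<noteq> 0"
    then show "in_chart (qmap None) (qmap (unchart None z))"
      using Q_inverse[of z] assms by (cases "z = 0") (auto simp: image in_chart_Some qmap_Some)
  qed
  ultimately show ?thesis
    by blast
qed

lemma local_analysis_infinity_to_infinity:
  assumes "q2 = 0"
  shows "\<exists>D. (local_expr qmap None has_field_derivative D) (at 0) \<and>
    (D = 0 \<longleftrightarrow> fibre_discr (qmap None) = 0) \<and>
    (\<forall>\<^sub>F z in nhds 0. in_chart (qmap None) (qmap (unchart None z)))"
proof -
  have p2: "p2 \<noteq> 0"
    using degree_two assms by simp
  have image: "qmap None = None"
    unfolding qmap_None using assms by simp
  have Q_rev_0: "Q_rev 0 = 0"
    unfolding Q_rev_def using assms by simp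
  have "local_expr qmap None = (\<lambda>z. Q_rev z / P_rev z)"
  proof
    fix z
    show "local_expr qmap None z = Q_rev z / P_rev z"
      using P_inverse[of z] Q_inverse[of z]
      by (cases "z = 0") (auto simp: local_expr_def image Q_rev_0 qmap_Some)
  qed
  moreover have P_rev_0: "P_rev 0 \<noteq> 0"
    using p2 by (simp add: P_rev_def)
  moreover define D where "D = (q1 * P_rev 0 - Q_rev 0 * p1) / (P_rev 0 * P_rev 0)"
  ultimately have "(local_expr qmap None has_field_derivative D) (at 0)"
    using DERIV_divide[OF DERIV_Q_rev DERIV_P_rev P_rev_0] by simp
  moreover have "D = 0 \<longleftrightarrow> fibre_discr (qmap None) = 0"
    unfolding D_def image fibre_discr_def P_rev_def Q_rev_def using assms p2 by simp
  moreover have "\<forall>\<^sub>F z in nhds 0. in_chart (qmap None) (qmap (unchart None z))"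
    using isCont_eventually_ne[OF DERIV_isCont[OF DERIV_P_rev] P_rev_0]
  proof (rule eventually_mono)
    fix z
    assume "P_rev z \<noteq> 0"
    then show "in_chart (qmap None) (qmap (unchart None z))"
      using P_inverse[of z] by (cases "z = 0") (auto simp: image in_chart_None qmap_Some)
  qed
  ultimately show ?thesis
    by blast
qed

lemma local_analysis:
  "\<exists>D. (local_expr qmap w has_field_derivative D) (at (chart w w)) \<and>
    (D = 0 \<longleftrightarrow> fibre_discr (qmap w) = 0) \<and>
    (\<forall>\<^sub>F z in nhds (chart w w). in_chart (qmap w) (qmap (unchart w z)))"
proof (cases w)
  case None
  then show ?thesis
    using local_analysis_infinity_to_finite local_analysis_infinity_to_infinity
    by (metis chart.simps(4))
next
  case (Some a)
  then show ?thesis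
    using local_analysis_finite_to_finite local_analysis_finite_to_infinity by auto
qed

lemma sphere_differentiable_qmap: "sphere_differentiable qmap"
  unfolding sphere_differentiable_def using local_analysis by blast

lemma critical_point_qmap_iff: "critical_point qmap w \<longleftrightarrow> fibre_discr (qmap w) = 0"
proof -
  obtain D where "(local_expr qmap w has_field_derivative D) (at (chart w w))"
    and "D = 0 \<longleftrightarrow> fibre_discr (qmap w) = 0"
    using local_analysis by blast
  then show ?thesis
    using critical_point_iff_deriv by blast
qed

lemma qmap_fibre_critical_point:
  assumes "critical_point qmap c"
  shows "{w. qmap w = qmap c} = {c}"
proof -
  have "card {w. qmap w = qmap c} = 1"
    using assms card_fibre_roots unfolding qmap_eq_iff critical_point_qmap_iff by simp
  moreover have "c \<in> {w. qmap w = qmap c}"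
    by simp
  ultimately show ?thesis
    by (metis card_1_singletonE singletonD)
qed

lemma card_qmap_fibre:
  assumes "\<not> critical_value qmap y"
  shows "card {w. qmap w = y} = 2"
proof -
  have fibre: "{w. qmap w = y} = fibre_roots y"
    using qmap_eq_iff by blast
  have "fibre_roots y \<noteq> {}"
    using card_fibre_roots[of y] by (metis card.empty zero_neq_numeral zero_neq_one)
  then obtain w where "qmap w = y"
    using qmap_eq_iff by blast
  then have "fibre_discr y \<noteq> 0"
    using assms critical_point_qmap_iff unfolding critical_value_def by blast
  then show ?thesis
    unfolding fibre card_fibre_roots by simp
qed

end

lemma poly_degree_le_2:
  fixes p :: "'a::comm_semiring_1 poly"
  assumes "degree p \<le> 2"
  shows "poly p z = coeff p 2 * z^2 + coeff p 1 * z + coeff p 0"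
proof -
  have "poly p z = (\<Sum>i\<le>degree p. coeff p i * z ^ i)"
    by (rule poly_altdef)
  also have "\<dots> = (\<Sum>i\<le>2. coeff p i * z ^ i)"
    using assms by (intro sum.mono_neutral_left) (auto simp: coeff_eq_0)
  also have "\<dots> = coeff p 2 * z^2 + coeff p 1 * z + coeff p 0"
    by (simp add: numeral_2_eq_2 algebra_simps)
  finally show ?thesis .
qed

lemma quadratic_rational_map_coeffs:
  assumes "quadratic_rational_map f"
  obtains p0 p1 p2 q0 q1 q2
  where "quadratic_map p0 p1 p2 q0 q1 q2" and "f = quadratic_map.qmap p0 p1 p2 q0 q1 q2"
proof -
  obtain p q where "q \<noteq> 0" and "coprime p q" and degree: "max (degree p) (degree q) = 2"
    and f_eq: "f = rat_eval p q"
    using assms unfolding quadratic_rational_map_def by blast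
  have p_le: "degree p \<le> 2" and q_le: "degree q \<le> 2"
    using degree by auto
  note poly_p = poly_degree_le_2[OF p_le] and poly_q = poly_degree_le_2[OF q_le]
  interpret quadratic_map "coeff p 0" "coeff p 1" "coeff p 2" "coeff q 0" "coeff q 1" "coeff q 2"
  proof
    fix a
    assume "coeff p 2 * a^2 + coeff p 1 * a + coeff p 0 = 0"
      and "coeff q 2 * a^2 + coeff q 1 * a + coeff q 0 = 0"
    then have "[:-a, 1:] dvd p" and "[:-a, 1:] dvd q"
      using poly_p poly_q by (simp_all add: poly_eq_0_iff_dvd[symmetric])
    then have "is_unit [:-a, 1:]"
      using \<open>coprime p q\<close> coprime_common_divisor by blast
    then show False
      by (simp add: is_unit_iff_degree)
  next
    show "coeff p 2 \<noteq> 0 \<or> coeff q 2 \<noteq> 0"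
      using degree by (metis leading_coeff_0_iff max_def zero_neq_numeral degree_0)
  next
    show "(coeff q 2, coeff q 1, coeff q 0) \<noteq> (0, 0, 0)"
    proof
      assume low: "(coeff q 2, coeff q 1, coeff q 0) = (0, 0, 0)"
      have "coeff q n = 0" for n
      proof (cases "n > 2")
        case True
        then show ?thesis
          using q_le by (simp add: coeff_eq_0)
      next
        case False
        then have "n = 0 \<or> n = 1 \<or> n = 2"
          by linarith
        with low show ?thesis
          by auto
      qed
      with \<open>q \<noteq> 0\<close> show False
        by (simp add: poly_eq_iff)
    qed
  qed
  have "f = qmap"
  proof
    fix w
    show "f w = qmap w"
    proof (cases w)
      case (Some a)
      then show ?thesis
        unfolding f_eq qmap_def rat_eval_def P_def Q_def using poly_p poly_q by simp
    next
      case None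
      have "coeff q 2 = 0 \<longleftrightarrow> degree p > degree q"
        using degree q_le \<open>q \<noteq> 0\<close> by (metis coeff_eq_0 leading_coeff_0_iff le_antisym max_def not_le
          numeral_less_iff semiring_norm(75))
      moreover have "coeff q 2 \<noteq> 0 \<Longrightarrow> degree p = degree q \<Longrightarrow>
          lead_coeff p / lead_coeff q = coeff p 2 / coeff q 2"
        using q_le le_degree[of q 2] by (metis antisym)
      moreover have "coeff q 2 \<noteq> 0 \<Longrightarrow> degree p < degree q \<Longrightarrow> coeff p 2 = 0"
        using q_le by (simp add: coeff_eq_0)
      ultimately show ?thesis
        unfolding f_eq qmap_def rat_eval_def None
        by (cases "degree p > degree q"; cases "degree p = degree q") auto
    qed
  qed
  with that show ?thesis
    using quadratic_map_axioms by blast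
qed

lemma sphere_differentiable_quadratic_rational_map:
  "quadratic_rational_map f \<Longrightarrow> sphere_differentiable f"
  by (metis quadratic_rational_map_coeffs quadratic_map.sphere_differentiable_qmap)

lemma quadratic_rational_map_fibre_critical_point:
  "quadratic_rational_map f \<Longrightarrow> critical_point f c \<Longrightarrow> {w. f w = f c} = {c}"
  by (metis quadratic_rational_map_coeffs quadratic_map.qmap_fibre_critical_point)

lemma card_quadratic_rational_map_fibre:
  "quadratic_rational_map f \<Longrightarrow> \<not> critical_value f y \<Longrightarrow> card {w. f w = y} = 2"
  by (metis quadratic_rational_map_coeffs quadratic_map.card_qmap_fibre)

section \<open>Counting critical points of iterates\<close>

lemma bij_betw_critical_points_values:
  assumes "quadratic_rational_map f"
  shows "bij_betw f {c. critical_point f c} {v. critical_value f v}"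
proof (rule bij_betw_imageI)
  show "inj_on f {c. critical_point f c}"
    using quadratic_rational_map_fibre_critical_point[OF assms] by (intro inj_onI) blast
  show "f ` {c. critical_point f c} = {v. critical_value f v}"
    unfolding critical_value_def by blast
qed

lemma card_funpow_fibre:
  assumes "quadratic_rational_map f"
    and "\<And>s v. s < n \<Longrightarrow> critical_value f v \<Longrightarrow> (f ^^ s) v \<noteq> y"
  shows "card {w. (f ^^ n) w = y} = 2 ^ n"
  using assms(2)
proof (induction n arbitrary: y)
  case 0
  then show ?case
    by simp
next
  case (Suc n)
  have "\<not> critical_value f y"
    using Suc.prems[of 0] by auto
  then have card_fibre: "card {x. f x = y} = 2"
    using card_quadratic_rational_map_fibre[OF assms(1)] by blast
  have card_x: "card {w. (f ^^ n) w = x} = 2 ^ n" if "f x = y" for x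
    using Suc.prems that by (intro Suc.IH) (metis Suc_less_eq funpow.simps(2) o_apply)
  have "{w. (f ^^ Suc n) w = y} = (\<Union>x\<in>{x. f x = y}. {w. (f ^^ n) w = x})"
    by auto
  also have "card \<dots> = (\<Sum>x\<in>{x. f x = y}. card {w. (f ^^ n) w = x})"
    using card_fibre card_x by (intro card_UN_disjoint) (auto intro: card_ge_0_finite)
  also have "\<dots> = 2 ^ Suc n"
    using card_fibre card_x by simp
  finally show ?case .
qed

definition crit_addresses :: "(sphere \<Rightarrow> sphere) \<Rightarrow> nat \<Rightarrow> sphere \<Rightarrow> (nat \<times> sphere) set" where
  "crit_addresses f k z = {(i, c). i < k \<and> critical_point f c \<and> (f ^^ (k - i)) c = z}"

lemma funpow_split: "i \<le> k \<Longrightarrow> (f ^^ k) w = (f ^^ (k - i)) ((f ^^ i) w)"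
  by (metis funpow_add le_add_diff_inverse2 o_apply)

lemma critical_points_funpow_fibre:
  assumes "sphere_differentiable f"
  shows "{w. (f ^^ k) w = z \<and> critical_point (f ^^ k) w} =
    (\<Union>(i, c)\<in>crit_addresses f k z. {w. (f ^^ i) w = c})"
proof -
  have "(f ^^ k) w = z \<and> critical_point (f ^^ k) w \<longleftrightarrow>
      (\<exists>i<k. critical_point f ((f ^^ i) w) \<and> (f ^^ (k - i)) ((f ^^ i) w) = z)" for w
  proof
    assume fibre: "(f ^^ k) w = z \<and> critical_point (f ^^ k) w"
    then obtain i where "i < k" and "critical_point f ((f ^^ i) w)"
      using critical_point_funpow[OF assms] by blast
    with fibre show "\<exists>i<k. critical_point f ((f ^^ i) w) \<and> (f ^^ (k - i)) ((f ^^ i) w) = z"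
      using funpow_split[of i k f w] by auto
  next
    assume "\<exists>i<k. critical_point f ((f ^^ i) w) \<and> (f ^^ (k - i)) ((f ^^ i) w) = z"
    then show "(f ^^ k) w = z \<and> critical_point (f ^^ k) w"
      using critical_point_funpow[OF assms] funpow_split[of _ k f w] by (metis less_imp_le)
  qed
  then show ?thesis
    unfolding crit_addresses_def by auto
qed

lemma finite_crit_addresses:
  "finite {c. critical_point f c} \<Longrightarrow> finite (crit_addresses f k z)"
  by (rule finite_subset[rotated, OF finite_cartesian_product[OF finite_lessThan]])
    (auto simp: crit_addresses_def)

lemma disjoint_funpow_preimages:
  assumes "critical_point f c"
    and no_return: "\<And>s v. critical_value f v \<Longrightarrow> (f ^^ s) v \<noteq> c'"
    and "i < i'"
  shows "{w. (f ^^ i) w = c} \<inter> {w. (f ^^ i') w = c'} = {}"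
proof -
  have "(f ^^ (i' - i - 1)) (f c) \<noteq> c'"
    using assms(1) no_return unfolding critical_value_def by blast
  then have "(f ^^ (i' - i)) c \<noteq> c'"
    using \<open>i < i'\<close> by (metis Suc_diff_Suc diff_Suc_1 funpow_Suc_right o_apply)
  then show ?thesis
    using funpow_split[of i i' f] \<open>i < i'\<close> by auto
qed

lemma crit_in_fiber_eq_sum:
  assumes qrm: "quadratic_rational_map f"
    and finite: "finite {v. critical_value f v}"
    and no_return: "\<And>s v c. critical_value f v \<Longrightarrow> critical_point f c \<Longrightarrow> (f ^^ s) v \<noteq> c"
  shows "crit_in_fiber f k z = (\<Sum>(i, c)\<in>crit_addresses f k z. 2 ^ i)"
proof -
  have card_preimage: "card {w. (f ^^ i) w = c} = 2 ^ i" if "critical_point f c" for i c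
    using card_funpow_fibre[OF qrm] no_return that by blast
  have "finite {c. critical_point f c}"
    using bij_betw_finite[OF bij_betw_critical_points_values[OF qrm]] finite by blast
  then have "finite (crit_addresses f k z)"
    by (rule finite_crit_addresses)
  moreover have "{w. (f ^^ i) w = c} \<inter> {w. (f ^^ i') w = c'} = {}"
    if "(i, c) \<in> crit_addresses f k z" "(i', c') \<in> crit_addresses f k z" "(i, c) \<noteq> (i', c')"
    for i i' c c'
  proof (cases i i' rule: linorder_cases)
    case less
    then show ?thesis
      using disjoint_funpow_preimages no_return that by (simp add: crit_addresses_def)
  next
    case equal
    then show ?thesis
      using that by auto
  next
    case greater
    then show ?thesis
      using disjoint_funpow_preimages[of f c' c i' i] no_return that
      by (auto simp: crit_addresses_def)
  qed
  ultimately have "card (\<Union>(i, c)\<in>crit_addresses f k z. {w. (f ^^ i) w = c}) =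
      (\<Sum>(i, c)\<in>crit_addresses f k z. card {w. (f ^^ i) w = c})"
    by (subst card_UN_disjoint)
      (auto intro: card_ge_0_finite simp: card_preimage crit_addresses_def split_beta)
  also have "\<dots> = (\<Sum>(i, c)\<in>crit_addresses f k z. 2 ^ i)"
    by (intro sum.cong) (auto simp: crit_addresses_def card_preimage)
  finally show ?thesis
    unfolding crit_in_fiber_def
    using critical_points_funpow_fibre[OF sphere_differentiable_quadratic_rational_map[OF qrm]]
    by simp
qed

section \<open>Critically coalescing maps with critical orbit ending at a fixed point\<close>

locale coalescing_fixed_orbit =
  fixes f :: "sphere \<Rightarrow> sphere" and v1 v2 \<alpha> :: sphere and m :: nat
  assumes qrm: "quadratic_rational_map f"
    and critical_values: "{v. critical_value f v} = {v1, v2}"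
    and values_distinct: "v1 \<noteq> v2"
    and coalescing: "f v1 = f v2"
    and fixed: "f \<alpha> = \<alpha>"
    and reaches_fixed: "\<exists>n. (f ^^ n) v1 = \<alpha>"
    and m_def: "m = (LEAST n. (f ^^ n) v1 = \<alpha>)"
    and m_gt_2: "m > 2"
begin

lemma critical_value_iff: "critical_value f v \<longleftrightarrow> v = v1 \<or> v = v2"
  using critical_values by blast

lemma orbit_eq_fixed_iff: "(f ^^ n) v1 = \<alpha> \<longleftrightarrow> m \<le> n"
proof
  show "(f ^^ n) v1 = \<alpha> \<Longrightarrow> m \<le> n"
    unfolding m_def by (rule Least_le)
  have "(f ^^ j) \<alpha> = \<alpha>" for j
    by (induction j) (simp_all add: fixed)
  moreover have "(f ^^ m) v1 = \<alpha>"
    unfolding m_def using reaches_fixed by (rule LeastI_ex)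
  ultimately show "m \<le> n \<Longrightarrow> (f ^^ n) v1 = \<alpha>"
    using funpow_split[of m n f v1] by simp
qed

text \<open>Before reaching \<open>\<alpha>\<close> the orbit of \<open>v\<^sub>1\<close> cannot repeat: a repetition would make it periodic,
  hence equal to \<open>\<alpha>\<close> from that point on.\<close>

lemma orbit_repeat:
  assumes "a < b" and repeat: "(f ^^ a) v1 = (f ^^ b) v1"
  shows "m \<le> a"
proof -
  define x where "x = (f ^^ a) v1"
  have "(f ^^ (b - a)) x = x"
    using funpow_split[of a b f v1] assms unfolding x_def by simp
  then have periodic: "(f ^^ (N * (b - a))) x = x" for N
    by (induction N) (simp_all add: funpow_add)
  have "m * 1 \<le> m * (b - a)"
    using \<open>a < b\<close> by (intro mult_le_mono2) simp
  then have "m \<le> m * (b - a) + a"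
    by linarith
  then have "(f ^^ (m * (b - a))) x = \<alpha>"
    using orbit_eq_fixed_iff[of "m * (b - a) + a"] unfolding x_def by (simp add: funpow_add)
  then show ?thesis
    using periodic orbit_eq_fixed_iff unfolding x_def by simp
qed

lemma funpow_v2: "0 < n \<Longrightarrow> (f ^^ n) v2 = (f ^^ n) v1"
  using coalescing by (metis funpow_Suc_right gr0_conv_Suc o_apply)

lemma orbit_not_critical_value:
  assumes "critical_value f v" and "0 < t"
  shows "\<not> critical_value f ((f ^^ t) v)"
proof
  assume "critical_value f ((f ^^ t) v)"
  moreover have "(f ^^ t) v = (f ^^ t) v1"
    using assms funpow_v2 critical_value_iff by auto
  ultimately consider "(f ^^ t) v1 = v1" | "(f ^^ t) v1 = v2"
    using critical_value_iff by auto
  then show False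
  proof cases
    case 1
    then show False
      using orbit_repeat[of 0 t] \<open>0 < t\<close> m_gt_2 by simp
  next
    case 2
    then have "(f ^^ 1) v1 = (f ^^ Suc t) v1"
      using coalescing by simp
    then show False
      using orbit_repeat[of 1 "Suc t"] \<open>0 < t\<close> m_gt_2 by simp
  qed
qed

lemma critical_orbit_no_return:
  assumes "critical_value f v" and "critical_point f c"
  shows "(f ^^ s) v \<noteq> c"
proof
  assume "(f ^^ s) v = c"
  then have "(f ^^ Suc s) v = f c"
    by simp
  then show False
    using orbit_not_critical_value[OF assms(1), of "Suc s"] assms(2)
    unfolding critical_value_def by auto
qed

lemma card_critical_points: "card {c. critical_point f c} = 2"
  using bij_betw_same_card[OF bij_betw_critical_points_values[OF qrm]] critical_values
    values_distinct by simp

lemma finite_critical_points: "finite {c. critical_point f c}"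
  using card_critical_points by (intro card_ge_0_finite) simp

lemma crit_in_fiber_sum: "crit_in_fiber f k z = (\<Sum>(i, c)\<in>crit_addresses f k z. 2 ^ i)"
  using crit_in_fiber_eq_sum[OF qrm] critical_values critical_orbit_no_return by simp

lemma critical_point_image: "critical_point f c \<Longrightarrow> f c = v1 \<or> f c = v2"
  using critical_value_iff unfolding critical_value_def by blast

lemma funpow_critical_point:
  assumes "critical_point f c" and "1 < n"
  shows "(f ^^ n) c = (f ^^ (n - 1)) v1"
proof -
  have "(f ^^ n) c = (f ^^ (n - 1)) (f c)"
    using \<open>1 < n\<close> by (metis Suc_diff_1 funpow_Suc_right less_trans o_apply zero_less_one)
  then show ?thesis
    using critical_point_image[OF assms(1)] funpow_v2 \<open>1 < n\<close> by auto
qed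

lemma critical_value_ne_fixed: "critical_value f v \<Longrightarrow> v \<noteq> \<alpha>"
  using orbit_eq_fixed_iff[of 0] orbit_eq_fixed_iff[of 1] coalescing fixed m_gt_2
  unfolding critical_value_iff by auto

lemma crit_addresses_critical_value:
  assumes "critical_point f c" and "0 < k"
  shows "crit_addresses f k (f c) = {(k - 1, c)}"
proof (intro equalityI subsetI)
  fix x
  assume "x \<in> crit_addresses f k (f c)"
  then obtain i c' where x: "x = (i, c')" and "i < k" and c': "critical_point f c'"
    and image: "(f ^^ (k - i)) c' = f c"
    unfolding crit_addresses_def by auto
  have "\<not> 1 < k - i"
  proof
    assume "1 < k - i"
    then have "\<not> critical_value f ((f ^^ (k - i)) c')"
      using funpow_critical_point[OF c'] orbit_not_critical_value[of v1 "k - i - 1"]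
      by (simp add: critical_value_iff)
    moreover have "critical_value f ((f ^^ (k - i)) c')"
      using image assms(1) unfolding critical_value_def by auto
    ultimately show False
      by contradiction
  qed
  then have "k - i = 1"
    using \<open>i < k\<close> by linarith
  then have "f c' = f c"
    using image by simp
  then have "c' = c"
    using quadratic_rational_map_fibre_critical_point[OF qrm assms(1)] by auto
  with x \<open>k - i = 1\<close> show "x \<in> {(k - 1, c)}"
    by simp
next
  fix x
  assume "x \<in> {(k - 1, c)}"
  then show "x \<in> crit_addresses f k (f c)"
    using assms by (simp add: crit_addresses_def)
qed

lemma crit_addresses_orbit:
  assumes "1 \<le> j" and "j < m" and "m < k"
  shows "crit_addresses f k ((f ^^ j) v1) = {k - j - 1} \<times> {c. critical_point f c}"
proof (intro equalityI subsetI)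
  fix x
  assume "x \<in> crit_addresses f k ((f ^^ j) v1)"
  then obtain i c where x: "x = (i, c)" and "i < k" and c: "critical_point f c"
    and image: "(f ^^ (k - i)) c = (f ^^ j) v1"
    unfolding crit_addresses_def by auto
  have "k - i \<noteq> 1"
  proof
    assume "k - i = 1"
    then have "f c = (f ^^ j) v1"
      using image by simp
    then have "critical_value f ((f ^^ j) v1)"
      using c unfolding critical_value_def by blast
    moreover have "critical_value f v1"
      by (simp add: critical_value_iff)
    ultimately show False
      using orbit_not_critical_value assms(1) by simp
  qed
  then have orbit_eq: "(f ^^ (k - i - 1)) v1 = (f ^^ j) v1"
    using image funpow_critical_point[OF c] \<open>i < k\<close> by simp
  have "k - i - 1 = j"
  proof (rule ccontr)
    assume "k - i - 1 \<noteq> j"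
    then consider "k - i - 1 < j" | "j < k - i - 1"
      by linarith
    then show False
    proof cases
      case 1
      then show False
        using orbit_repeat[OF 1 orbit_eq] assms(2) by linarith
    next
      case 2
      then show False
        using orbit_repeat[OF 2 orbit_eq[symmetric]] assms(2) by linarith
    qed
  qed
  then have "i = k - j - 1"
    using \<open>i < k\<close> by linarith
  with x c show "x \<in> {k - j - 1} \<times> {c. critical_point f c}"
    by simp
next
  fix x
  assume "x \<in> {k - j - 1} \<times> {c. critical_point f c}"
  then obtain c where x: "x = (k - j - 1, c)" and c: "critical_point f c"
    by auto
  have "k - (k - j - 1) = j + 1"
    using assms by linarith
  then show "x \<in> crit_addresses f k ((f ^^ j) v1)"
    using funpow_critical_point[OF c, of "j + 1"] assms x c by (simp add: crit_addresses_def)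
qed

lemma crit_addresses_fixed:
  assumes "m < k"
  shows "crit_addresses f k \<alpha> = {..<k - m} \<times> {c. critical_point f c}"
proof -
  have "(f ^^ (k - i)) c = \<alpha> \<longleftrightarrow> i < k - m" if "i < k" and c: "critical_point f c" for i c
  proof (cases "k - i = 1")
    case True
    have "critical_value f (f c)"
      using c unfolding critical_value_def by blast
    then have "(f ^^ (k - i)) c \<noteq> \<alpha>"
      using critical_value_ne_fixed True by simp
    moreover have "\<not> i < k - m"
      using True m_gt_2 by linarith
    ultimately show ?thesis
      by blast
  next
    case False
    then have "(f ^^ (k - i)) c = (f ^^ (k - i - 1)) v1"
      using funpow_critical_point[OF c] \<open>i < k\<close> by simp
    moreover have "m \<le> k - i - 1 \<longleftrightarrow> i < k - m"
      using \<open>i < k\<close> m_gt_2 by linarith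
    ultimately show ?thesis
      using orbit_eq_fixed_iff by simp
  qed
  then show ?thesis
    unfolding crit_addresses_def using assms by auto
qed

lemma crit_addresses_other:
  assumes "z \<notin> {v1, v2, f v1}"
  shows "crit_addresses f k z \<subseteq> {..<k - 2} \<times> {c. critical_point f c}"
proof
  fix x
  assume "x \<in> crit_addresses f k z"
  then obtain i c where x: "x = (i, c)" and "i < k" and c: "critical_point f c"
    and image: "(f ^^ (k - i)) c = z"
    unfolding crit_addresses_def by auto
  have "z \<noteq> f c" and "z \<noteq> f (f c)"
    using assms critical_point_image[OF c] coalescing by auto
  then have "k - i \<noteq> 1" and "k - i \<noteq> 2"
    using image by (auto simp: numeral_2_eq_2)
  with x c \<open>i < k\<close> show "x \<in> {..<k - 2} \<times> {c. critical_point f c}"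
    by auto
qed

lemma sum_over_critical_points:
  "(\<Sum>(i, c)\<in>A \<times> {c. critical_point f c}. (2::nat) ^ i) = 2 * (\<Sum>i\<in>A. 2 ^ i)"
proof -
  have "(\<Sum>(i, c)\<in>A \<times> {c. critical_point f c}. (2::nat) ^ i) =
      (\<Sum>i\<in>A. \<Sum>c\<in>{c. critical_point f c}. 2 ^ i)"
    by (rule sum.cartesian_product[symmetric])
  then show ?thesis
    using card_critical_points by (simp add: sum_distrib_left mult.commute)
qed

lemma crit_in_fiber_critical_value:
  assumes "critical_value f v" and "0 < k"
  shows "crit_in_fiber f k v = 2 ^ (k - 1)"
  using assms crit_addresses_critical_value unfolding crit_in_fiber_sum critical_value_def by auto

lemma crit_in_fiber_orbit:
  assumes "1 \<le> j" and "j < m" and "m < k"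
  shows "crit_in_fiber f k ((f ^^ j) v1) = 2 ^ (k - j)"
proof -
  have "crit_in_fiber f k ((f ^^ j) v1) = 2 * 2 ^ (k - j - 1)"
    unfolding crit_in_fiber_sum crit_addresses_orbit[OF assms] sum_over_critical_points by simp
  also have "\<dots> = 2 ^ (k - j)"
    using assms by (simp flip: power_Suc)
  finally show ?thesis .
qed

lemma crit_in_fiber_fixed:
  assumes "m < k"
  shows "crit_in_fiber f k \<alpha> = 2 ^ (k - (m - 1)) - 2"
proof -
  have "crit_in_fiber f k \<alpha> = 2 * (2 ^ (k - m) - 1)"
    unfolding crit_in_fiber_sum crit_addresses_fixed[OF assms] sum_over_critical_points
    by (simp add: lessThan_atLeast0 sum_power2)
  also have "\<dots> = 2 ^ (k - (m - 1)) - 2"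
  proof -
    have "k - (m - 1) = Suc (k - m)"
      using assms m_gt_2 by linarith
    then show ?thesis
      by (simp add: diff_mult_distrib2)
  qed
  finally show ?thesis .
qed

lemma crit_in_fiber_other:
  assumes "z \<notin> {v1, v2, f v1}" and "2 < k"
  shows "crit_in_fiber f k z < 2 ^ (k - 1)"
proof -
  have "crit_in_fiber f k z \<le> (\<Sum>(i, c)\<in>{..<k - 2} \<times> {c. critical_point f c}. 2 ^ i)"
    unfolding crit_in_fiber_sum using crit_addresses_other[OF assms(1)]
    by (intro sum_mono2) (auto simp: finite_critical_points)
  also have "\<dots> = 2 * (2 ^ (k - 2) - 1)"
    unfolding sum_over_critical_points by (simp add: lessThan_atLeast0 sum_power2)
  also have "\<dots> < 2 ^ (k - 1)"
  proof -
    have "k - 1 = Suc (k - 2)"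
      using assms(2) by linarith
    then show ?thesis
      by (simp add: diff_mult_distrib2)
  qed
  finally show ?thesis .
qed

end

theorem mainTheorem19:
  fixes f :: "sphere \<Rightarrow> sphere" and v1 v2 \<alpha> :: sphere and m k :: nat
  assumes "quadratic_rational_map f"
    and "{v. critical_value f v} = {v1, v2}" and "v1 \<noteq> v2"
    and "f v1 = f v2"
    and "f \<alpha> = \<alpha>" and "\<exists>n. (f ^^ n) v1 = \<alpha>"
    and "m = (LEAST n. (f ^^ n) v1 = \<alpha>)" and "m > 2"
    and "k > m"
  shows "(\<forall>z. crit_in_fiber f k z = 2 ^ (k - 1) \<longleftrightarrow> z \<in> {v1, v2, f v1}) \<and>
         (\<forall>j \<in> {2..m-1}. crit_in_fiber f k ((f ^^ j) v1) = 2 ^ (k - j)) \<and>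
         crit_in_fiber f k \<alpha> = 2 ^ (k - (m - 1)) - 2"
proof -
  interpret coalescing_fixed_orbit f v1 v2 \<alpha> m
    using assms(1-8) by unfold_locales
  have "crit_in_fiber f k z = 2 ^ (k - 1)" if "z \<in> {v1, v2, f v1}" for z
    using that crit_in_fiber_critical_value[of _ k] crit_in_fiber_orbit[of 1 k] assms(8,9)
    unfolding critical_value_iff by auto
  moreover have "crit_in_fiber f k z \<noteq> 2 ^ (k - 1)" if "z \<notin> {v1, v2, f v1}" for z
    using crit_in_fiber_other[OF that, of k] assms(8,9) by simp
  ultimately show ?thesis
    using crit_in_fiber_orbit crit_in_fiber_fixed assms(9) by auto
qed

end
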